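(* Let $K$ be a closed convex cone in a finite-dimensional real Euclidean space $\mathbb{E}$. If $K$ is facially dual complete, then for every face $F$ of $K$ with $F\neq K$ and every $x\in F$, \[ \mathcal{T}(x;K)\cap \operatorname{span} F = \mathcal{T}(x;F). \] That is, every facially dual complete closed convex cone is tangentially exposed.
   Context: $\mathbb{E}$ is identified with its dual via the inner product. For a closed convex set $C$ and $x\in C$, the tangent cone is $\mathcal{T}(x;C)=\operatorname{cl}\{d\in\mathbb{E}: x+\epsilon d\in C \text{ for some } \epsilon>0\}$. A face of a closed convex set $C$ is a closed convex subset $F\subseteq C$ such that whenever $x\in F$, $y,z\in C$ and $x$ lies in the open segment $(y,z)$, then $y,z\in F$. For a closed convex cone $K$, $K^*=\{s:\langle s,x\rangle\ge 0\ \forall x\in K\}$, and for $F\subseteq \mathbb{E}$, $F^\perp=\{s:\langle s,x\rangle=0\ \forall x\in F\}$. $K$ is facially dual complete (FDC, "nice") if $K^*+F^\perp$ is closed for every nonempty face $F\neq K$ of $K$. A closed convex cone $K$ is tangentially exposed if $\mathcal{T}(x;K)\cap\operatorname{span}F=\mathcal{T}(x;F)$ for every face $F\neq K$ of $K$ and every $x\in F$. *)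

theory Defs
  imports "HOL-Analysis.Analysis"
begin

definition tangent_cone :: "'a::euclidean_space \<Rightarrow> 'a set \<Rightarrow> 'a set" where
  "tangent_cone x C = closure {d. \<exists>\<epsilon>>0. x + \<epsilon> *\<^sub>R d \<in> C}"

definition is_face :: "'a::euclidean_space set \<Rightarrow> 'a set \<Rightarrow> bool" where
  "is_face F C \<longleftrightarrow> closed F \<and> F face_of C"

definition dual_cone :: "'a::euclidean_space set \<Rightarrow> 'a set" where
  "dual_cone K = {s. \<forall>x\<in>K. inner s x \<ge> 0}"

definition perp :: "'a::euclidean_space set \<Rightarrow> 'a set" where
  "perp F = {s. \<forall>x\<in>F. inner s x = 0}"

definition closed_convex_cone :: "'a::euclidean_space set \<Rightarrow> bool" where
  "closed_convex_cone K \<longleftrightarrow> closed K \<and> convex K \<and> cone K \<and> K \<noteq> {}"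

definition facially_dual_complete :: "'a::euclidean_space set \<Rightarrow> bool" where
  "facially_dual_complete K \<longleftrightarrow>
     (\<forall>F. is_face F K \<and> F \<noteq> {} \<and> F \<noteq> K \<longrightarrow> closed (dual_cone K + perp F))"

definition tangentially_exposed :: "'a::euclidean_space set \<Rightarrow> bool" where
  "tangentially_exposed K \<longleftrightarrow>
     (\<forall>F x. is_face F K \<and> F \<noteq> K \<and> x \<in> F \<longrightarrow>
        tangent_cone x K \<inter> span F = tangent_cone x F)"

end

theory Submission
  imports Defs
begin

text \<open>A face \<open>F\<close> of a cone \<open>K\<close> is a cone with \<open>K \<inter> span F = F\<close>, so \<open>F\<^sup>*\<close> is the closure of
  \<open>K\<^sup>* + F\<^sup>\<bottom>\<close>; facial dual completeness removes the closure. Now let \<open>d \<in> span F\<close> be tangent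
  to \<open>K\<close> at \<open>x \<in> F\<close> but not to \<open>F\<close>. Separating \<open>d\<close> from the closed convex cone \<open>T(x;F)\<close>
  gives \<open>k \<in> F\<^sup>*\<close> with \<open>\<langle>k,x\<rangle> = 0\<close> and \<open>\<langle>k,d\<rangle> < 0\<close>. Writing \<open>k = a + p\<close> with \<open>a \<in> K\<^sup>*\<close> and
  \<open>p \<in> F\<^sup>\<bottom>\<close>, we get \<open>\<langle>a,x\<rangle> = 0\<close>, so \<open>a\<close> is nonnegative on \<open>T(x;K)\<close>, while \<open>\<langle>p,d\<rangle> = 0\<close>;
  hence \<open>\<langle>k,d\<rangle> \<ge> 0\<close>, a contradiction.\<close>

lemma closed_convex_cone_iff: "closed_convex_cone K \<longleftrightarrow> closed K \<and> convex_cone K"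
  by (auto simp: closed_convex_cone_def convex_cone_def conic_def cone_def)

lemma convex_cone_set_plus:
  assumes "convex_cone A" "convex_cone B"
  shows "convex_cone (A + B)"
proof -
  have "A + B = (\<Union>a\<in>A. \<Union>b\<in>B. {a + b})"
    by (auto simp: set_plus_def)
  then show ?thesis
    using convex_cone_sums[OF assms] by simp
qed

lemma closed_convex_cone_separation:
  fixes C :: "'a::euclidean_space set"
  assumes "closed C" "convex_cone C" "y \<notin> C"
  obtains k where "k \<in> dual_cone C" "inner k y < 0"
proof -
  obtain a b where ay: "inner a y < b" and aC: "\<forall>z\<in>C. b < inner a z"
    using separating_hyperplane_closed_point assms convex_cone_def by metis
  have "0 \<in> C"
    using assms(2) convex_cone_iff by blast
  then have b: "b < 0"
    using aC by force
  have "0 \<le> inner a z" if z: "z \<in> C" for z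
  proof (rule ccontr)
    assume "\<not> 0 \<le> inner a z"
    then have neg: "inner a z < 0" by simp
    define c where "c = b / inner a z"
    have "c *\<^sub>R z \<in> C"
      using assms(2) z neg b by (auto simp: convex_cone_iff c_def divide_nonpos_neg)
    moreover have "inner a (c *\<^sub>R z) = b"
      using neg by (simp add: c_def)
    ultimately show False
      using aC by force
  qed
  then show thesis
    using that[of a] ay b by (auto simp: dual_cone_def)
qed

lemma dual_dual_cone:
  fixes C :: "'a::euclidean_space set"
  assumes "closed C" "convex_cone C"
  shows "dual_cone (dual_cone C) = C"
proof
  show "dual_cone (dual_cone C) \<subseteq> C"
  proof
    fix y assume y: "y \<in> dual_cone (dual_cone C)"
    show "y \<in> C"
    proof (rule ccontr)
      assume "y \<notin> C"
      then obtain k where k: "k \<in> dual_cone C" "inner k y < 0"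
        using closed_convex_cone_separation assms by blast
      have "0 \<le> inner y k"
        using y k(1) by (simp add: dual_cone_def)
      then show False
        using k(2) by (simp add: inner_commute)
    qed
  qed
qed (auto simp: dual_cone_def inner_commute)

lemma convex_cone_dual_cone: "convex_cone (dual_cone S)"
  by (auto simp: convex_cone_iff dual_cone_def inner_add_left)

lemma dual_cone_set_plus:
  assumes "0 \<in> A" "0 \<in> B"
  shows "dual_cone (A + B) = dual_cone A \<inter> dual_cone B"
proof
  show "dual_cone (A + B) \<subseteq> dual_cone A \<inter> dual_cone B"
    using assms set_plus_intro[of _ A 0 B] set_plus_intro[of 0 A _ B]
    by (fastforce simp: dual_cone_def)
qed (auto simp: dual_cone_def set_plus_def inner_add_right)

lemma subspace_perp: "subspace (perp S)"
  by (auto simp: subspace_def perp_def inner_add_left)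

lemma perp_span: "perp (span S) = perp S"
proof
  show "perp S \<subseteq> perp (span S)"
  proof
    fix p assume "p \<in> perp S"
    then have "S \<subseteq> {y. inner p y = 0}"
      by (auto simp: perp_def)
    moreover have "subspace {y. inner p y = 0}"
      by (auto simp: subspace_def inner_add_right)
    ultimately have "span S \<subseteq> {y. inner p y = 0}"
      by (rule span_minimal)
    then show "p \<in> perp (span S)"
      by (auto simp: perp_def)
  qed
  show "perp (span S) \<subseteq> perp S"
    using span_superset by (auto simp: perp_def)
qed

lemma dual_cone_subspace:
  assumes "subspace S"
  shows "dual_cone S = perp S"
proof
  show "dual_cone S \<subseteq> perp S"
  proof
    fix s assume s: "s \<in> dual_cone S"
    have "inner s z = 0" if "z \<in> S" for z
    proof -
      have "0 \<le> inner s z" "0 \<le> inner s (- z)"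
        using s that subspace_neg[OF assms that] by (auto simp: dual_cone_def)
      then show ?thesis
        by simp
    qed
    then show "s \<in> perp S"
      by (simp add: perp_def)
  qed
qed (auto simp: dual_cone_def perp_def)

lemma dual_cone_span: "dual_cone (span S) = perp S"
  by (simp add: dual_cone_subspace perp_span)

lemma dual_cone_perp:
  fixes S :: "'a::euclidean_space set"
  shows "dual_cone (perp S) = span S"
  by (metis dual_cone_span dual_dual_cone closed_span subspace_span subspace_imp_convex_cone)

lemma dual_cone_Int_span:
  fixes K :: "'a::euclidean_space set"
  assumes "closed K" "convex_cone K" "closed (dual_cone K + perp S)"
  shows "dual_cone (K \<inter> span S) = dual_cone K + perp S"
proof -
  have zero: "0 \<in> dual_cone K" "0 \<in> perp S"
    by (auto simp: dual_cone_def perp_def)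
  have "convex_cone (dual_cone K + perp S)"
    by (simp add: convex_cone_set_plus convex_cone_dual_cone subspace_imp_convex_cone subspace_perp)
  then have "dual_cone K + perp S = dual_cone (dual_cone (dual_cone K + perp S))"
    using assms(3) by (simp add: dual_dual_cone)
  also have "dual_cone (dual_cone K + perp S) = K \<inter> span S"
    using assms(1,2) by (simp add: dual_cone_set_plus[OF zero] dual_dual_cone dual_cone_perp)
  finally show ?thesis ..
qed

lemma face_of_convex_cone_Int_span:
  fixes K :: "'a::euclidean_space set"
  assumes "convex_cone K" "F face_of K" "F \<noteq> {}"
  shows "K \<inter> span F = F"
proof -
  have "0 \<in> F"
    using assms face_of_conic conic_contains_0 by (auto simp: convex_cone_def)
  then have "affine hull F = span F"
    by (simp add: affine_hull_span_0 hull_inc)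
  then show ?thesis
    using face_of_imp_eq_affine_Int[of K F] assms by (auto simp: convex_cone_def)
qed

lemma tangent_cone_mono: "C \<subseteq> D \<Longrightarrow> tangent_cone x C \<subseteq> tangent_cone x D"
  unfolding tangent_cone_def by (rule closure_mono) blast

lemma tangent_cone_subset_span:
  assumes "x \<in> S"
  shows "tangent_cone x S \<subseteq> span S"
  unfolding tangent_cone_def
proof (rule closure_minimal[OF _ closed_span], clarify)
  fix d and e :: real assume "e > 0" "x + e *\<^sub>R d \<in> S"
  then have "(1 / e) *\<^sub>R ((x + e *\<^sub>R d) - x) \<in> span S"
    using assms by (intro span_mul span_diff span_base)
  then show "d \<in> span S"
    using \<open>e > 0\<close> by simp
qed

lemma diff_mem_tangent_cone: "y \<in> C \<Longrightarrow> y - x \<in> tangent_cone x C"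
  unfolding tangent_cone_def by (rule closure_subset[THEN subsetD]) (auto intro!: exI[of _ 1])

lemma tangent_cone_subset_halfspace:
  assumes "\<forall>y\<in>C. inner a x \<le> inner a y"
  shows "tangent_cone x C \<subseteq> {d. 0 \<le> inner a d}"
  unfolding tangent_cone_def
proof (rule closure_minimal, clarify)
  fix d and e :: real assume "e > 0" "x + e *\<^sub>R d \<in> C"
  then have "0 \<le> e * inner a d"
    using assms by (fastforce simp: inner_add_right)
  then show "0 \<le> inner a d"
    using \<open>e > 0\<close> by (simp add: zero_le_mult_iff)
next
  show "closed {d. 0 \<le> inner a d}"
    using closed_halfspace_ge[of 0 a] by simp
qed

lemma feasible_directions_eq_conic_hull:
  assumes "x \<in> C"
  shows "{d. \<exists>\<epsilon>>0. x + \<epsilon> *\<^sub>R d \<in> C} = conic hull ((\<lambda>y. y - x) ` C)"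
proof (intro equalityI subsetI)
  fix d assume "d \<in> {d. \<exists>\<epsilon>>0. x + \<epsilon> *\<^sub>R d \<in> C}"
  then obtain e where "e > 0" "x + e *\<^sub>R d \<in> C"
    by blast
  then have "d = (1 / e) *\<^sub>R ((x + e *\<^sub>R d) - x)"
    by simp
  moreover have "(x + e *\<^sub>R d) - x \<in> (\<lambda>y. y - x) ` C"
    using \<open>x + e *\<^sub>R d \<in> C\<close> by blast
  ultimately show "d \<in> conic hull ((\<lambda>y. y - x) ` C)"
    unfolding conic_hull_explicit using \<open>e > 0\<close> by fastforce
next
  fix d assume "d \<in> conic hull ((\<lambda>y. y - x) ` C)"
  then obtain c y where d: "d = c *\<^sub>R (y - x)" "0 \<le> c" "y \<in> C"
    by (auto simp: conic_hull_explicit)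
  show "d \<in> {d. \<exists>\<epsilon>>0. x + \<epsilon> *\<^sub>R d \<in> C}"
  proof (cases "c = 0")
    case True
    then show ?thesis
      using d assms by (auto intro!: exI[of _ 1])
  next
    case False
    then have "x + (1 / c) *\<^sub>R d = y"
      using d by simp
    then show ?thesis
      using d False by (auto intro!: exI[of _ "1 / c"])
  qed
qed

lemma convex_cone_tangent_cone:
  assumes "convex C" "x \<in> C"
  shows "convex_cone (tangent_cone x C)"
proof -
  let ?D = "conic hull ((\<lambda>y. y - x) ` C)"
  have "tangent_cone x C = closure ?D"
    by (simp add: tangent_cone_def feasible_directions_eq_conic_hull assms(2))
  moreover have "convex ?D"
    by (simp add: convex_conic_hull convex_translation_subtract assms(1))
  moreover have "?D \<noteq> {}"
    using assms(2) by (auto simp: conic_hull_eq_empty)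
  ultimately show ?thesis
    by (simp add: convex_cone_def conic_closure conic_conic_hull)
qed

lemma mem_dual_cone_tangent_cone_conicD:
  assumes "conic F" "x \<in> F" "k \<in> dual_cone (tangent_cone x F)"
  shows "k \<in> dual_cone F" "inner k x = 0"
proof -
  have k: "0 \<le> inner k (y - x)" if "y \<in> F" for y
    using assms(3) diff_mem_tangent_cone[OF that] by (auto simp: dual_cone_def)
  have "0 \<in> F" "2 *\<^sub>R x \<in> F"
    using assms(1,2) conicD[of F x] by (auto simp: conic_contains_0)
  from k[OF this(1)] k[OF this(2)] show kx: "inner k x = 0"
    by (simp add: inner_diff_right)
  show "k \<in> dual_cone F"
    using k kx by (auto simp: dual_cone_def inner_diff_right)
qed

lemma tangent_cone_Int_span_face:
  fixes K :: "'a::euclidean_space set"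
  assumes K: "closed K" "convex_cone K" and F: "F face_of K" "x \<in> F"
    and dual_closed: "closed (dual_cone K + perp F)"
  shows "tangent_cone x K \<inter> span F = tangent_cone x F"
proof
  show "tangent_cone x F \<subseteq> tangent_cone x K \<inter> span F"
    by (intro Int_greatest tangent_cone_mono tangent_cone_subset_span face_of_imp_subset F)
next
  have convF: "convex F"
    using face_of_imp_convex[OF F(1)] .
  have conicF: "conic F"
    using face_of_conic[OF _ F(1)] K(2) by (simp add: convex_cone_def)
  have F_eq: "K \<inter> span F = F"
    using face_of_convex_cone_Int_span[OF K(2) F(1)] F(2) by blast
  show "tangent_cone x K \<inter> span F \<subseteq> tangent_cone x F"
  proof (rule subsetI, rule ccontr)
    fix d assume d: "d \<in> tangent_cone x K \<inter> span F" and d_notin: "d \<notin> tangent_cone x F"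
    have "closed (tangent_cone x F)"
      by (simp add: tangent_cone_def)
    then obtain k where k: "k \<in> dual_cone (tangent_cone x F)" and kd: "inner k d < 0"
      using closed_convex_cone_separation convex_cone_tangent_cone[OF convF F(2)] d_notin
      by blast
    have "k \<in> dual_cone (K \<inter> span F)" and kx: "inner k x = 0"
      using mem_dual_cone_tangent_cone_conicD[OF conicF F(2) k] F_eq by simp_all
    then have "k \<in> dual_cone K + perp F"
      using dual_cone_Int_span[OF K dual_closed] by simp
    then obtain a p where "a \<in> dual_cone K" and p: "p \<in> perp F" and k_eq: "k = a + p"
      by (auto elim: set_plus_elim)
    have "p \<in> dual_cone (span F)"
      using p by (simp add: dual_cone_span)
    then have pd: "0 \<le> inner p d"
      using d by (simp add: dual_cone_def)
    have "inner p x = 0"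
      using p F(2) by (simp add: perp_def)
    with \<open>a \<in> dual_cone K\<close> have "\<forall>y\<in>K. inner a x \<le> inner a y"
      using kx k_eq by (simp add: dual_cone_def inner_add_left)
    then have "0 \<le> inner a d"
      using tangent_cone_subset_halfspace[of K a x] d by blast
    then show False
      using kd k_eq pd by (simp add: inner_add_left)
  qed
qed

theorem theorem3p1:
  fixes K :: "'a::euclidean_space set"
  assumes "closed_convex_cone K"
    and "facially_dual_complete K"
  shows "\<forall>F x. is_face F K \<and> F \<noteq> K \<and> x \<in> F \<longrightarrow>
           tangent_cone x K \<inter> span F = tangent_cone x F"
proof (intro allI impI)
  fix F x
  assume F: "is_face F K \<and> F \<noteq> K \<and> x \<in> F"
  then have "closed (dual_cone K + perp F)"
    using assms(2) unfolding facially_dual_complete_def by blast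
  moreover have "closed K" "convex_cone K"
    using assms(1) by (simp_all add: closed_convex_cone_iff)
  moreover have "F face_of K" "x \<in> F"
    using F by (simp_all add: is_face_def)
  ultimately show "tangent_cone x K \<inter> span F = tangent_cone x F"
    by (simp add: tangent_cone_Int_span_face)
qed

end
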